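(* Let $\mathcal D$ be a normal duoidal category (so $\iota\colon\bot\to 1$ is an isomorphism), and let $T$ be a double opmonoidal monad on $\mathcal D$. Consider the four linear distributors $\partial^\ell_\ell\colon a\circ(b\bullet c)\cong(a\bullet 1)\circ(b\bullet c)\xrightarrow{\zeta}(a\circ b)\bullet(1\circ c)\cong(a\circ b)\bullet c$, $\partial^\ell_r\colon a\circ(b\bullet c)\cong(1\bullet a)\circ(b\bullet c)\xrightarrow{\zeta}(1\circ b)\bullet(a\circ c)\cong b\bullet(a\circ c)$, $\partial^r_\ell\colon (b\bullet c)\circ a\cong(b\bullet c)\circ(a\bullet 1)\xrightarrow{\zeta}(b\circ a)\bullet(c\circ 1)\cong(b\circ a)\bullet c$, $\partial^r_r\colon (b\bullet c)\circ a\cong(b\bullet c)\circ(1\bullet a)\xrightarrow{\zeta}(b\circ 1)\bullet(c\circ a)\cong b\bullet(c\circ a)$, where the unnamed isomorphisms are built from the unitors of $\bullet$ and $\circ$ and $\iota^{\pm1}$ (using $1\cong\bot$). Then for all objects $a,b,c$ of $\mathcal D$ (in particular for all $T$-algebras): (1) $(T^\circ_{2,a,b}\bullet Tc)\cdot T^\bullet_{2,a\circ b,c}\cdot T\partial^\ell_\ell = \partial^\ell_\ell\cdot(Ta\circ T^\bullet_{2,b,c})\cdot T^\circ_{2,a,b\bullet c}$; (2) $(Tb\bullet T^\circ_{2,c,a})\cdot T^\bullet_{2,b,c\circ a}\cdot T\partial^r_r = \partial^r_r\cdot(T^\bullet_{2,b,c}\circ Ta)\cdot T^\circ_{2,b\bullet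 c,a}$; (3) $(Tb\bullet T^\circ_{2,a,c})\cdot T^\bullet_{2,b,a\circ c}\cdot T\partial^\ell_r = \partial^\ell_r\cdot(Ta\circ T^\bullet_{2,b,c})\cdot T^\circ_{2,a,b\bullet c}$; (4) $(T^\circ_{2,b,a}\bullet Tc)\cdot T^\bullet_{2,b\circ a,c}\cdot T\partial^r_\ell = \partial^r_\ell\cdot(T^\bullet_{2,b,c}\circ Ta)\cdot T^\circ_{2,b\bullet c,a}$. Consequently $T$ lifts the (planar) linearly distributive structure of $\mathcal D$ to $\mathcal D^T$.
   Context: Composition of morphisms is written $g\cdot f$ ($f$ first). A duoidal category is a category $\mathcal D$ with monoidal structures $(\circ,\bot)$ and $(\bullet,1)$ (unitors $\lambda^\circ,\rho^\circ,\lambda^\bullet,\rho^\bullet$, associators $\alpha$), a natural transformation $\zeta_{x,y,a,b}\colon (x\bullet y)\circ(a\bullet b)\to(x\circ a)\bullet(y\circ b)$ and morphisms $\nu\colon\bot\to\bot\bullet\bot$, $\varpi\colon 1\circ 1\to 1$, $\iota\colon\bot\to 1$ such that $(1,\varpi,\iota)$ is a monoid in $(\mathcal D,\circ,\bot)$, $(\bot,\nu,\iota)$ is a comonoid in $(\mathcal D,\bullet,1)$, and: $(\alpha\bullet\alpha)\cdot\zeta_{x\circ a,y\circ b,c,d}\cdot(\zeta_{x,y,a,b}\circ\mathrm{id}) = \zeta_{x,y,a\circ c,b\circ d}\cdot(\mathrm{id}\circ\zeta_{a,b,c,d})\cdot\alpha$; $\alpha\cdot(\zeta_{x,a,y,b}\bullet\mathrm{id})\cdot\zeta_{x\bullet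 a,c,y\bullet b,d} = (\mathrm{id}\bullet\zeta_{a,c,b,d})\cdot\zeta_{x,a\bullet c,y,b\bullet d}\cdot(\alpha\circ\alpha)$; $\zeta_{\bot,\bot,a,b}\cdot(\nu\circ\mathrm{id})=((\lambda^\circ_a)^{-1}\bullet(\lambda^\circ_b)^{-1})\cdot\lambda^\circ_{a\bullet b}$, $\zeta_{a,b,\bot,\bot}\cdot(\mathrm{id}\circ\nu)=((\rho^\circ_a)^{-1}\bullet(\rho^\circ_b)^{-1})\cdot\rho^\circ_{a\bullet b}$, $(\varpi\bullet\mathrm{id})\cdot\zeta_{1,a,1,b}=(\lambda^\bullet_{a\circ b})^{-1}\cdot(\lambda^\bullet_a\circ\lambda^\bullet_b)$, $(\mathrm{id}\bullet\varpi)\cdot\zeta_{a,1,b,1}=(\rho^\bullet_{a\circ b})^{-1}\cdot(\rho^\bullet_a\circ\rho^\bullet_b)$. It is normal if $\bot\cong 1$ (equivalently $\iota$ is invertible). A bimonad on a monoidal category $(\mathcal C,\otimes,I)$ is a monad $(B,\mu,\eta)$ with an opmonoidal structure $B_2\colon B(x\otimes y)\to Bx\otimes By$, $B_0\colon BI\to I$ such that $\mu,\eta$ are opmonoidal natural transformations. A double opmonoidal monad on a duoidal category $\mathcal D$ is a monad $(T,\mu,\eta)$ with bimonad structures $(T^\bullet_2,T^\bullet_0)$ on $(\mathcal D,\bullet,1)$ and $(T^\circ_2,T^\circ_0)$ on $(\mathcal D,\circ,\bot)$ such that $T^\bullet_0\cdot T\varpi=\varpi\cdot(T^\bullet_0\circ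 T^\bullet_0)\cdot T^\circ_{2,1,1}$, $(T^\circ_0\bullet T^\circ_0)\cdot T^\bullet_{2,\bot,\bot}\cdot T\nu=\nu\cdot T^\circ_0$, $T^\bullet_0\cdot T\iota=\iota\cdot T^\circ_0$, and for all objects $\zeta_{Ta,Tb,Tc,Td}\cdot(T^\bullet_{2,a,b}\circ T^\bullet_{2,c,d})\cdot T^\circ_{2,a\bullet b,c\bullet d} = (T^\circ_{2,a,c}\bullet T^\circ_{2,b,d})\cdot T^\bullet_{2,a\circ c,b\circ d}\cdot T\zeta_{a,b,c,d}$. *)

theory Defs
  imports Main
begin

section \<open>Categories (arrows with domain/codomain; composition ccomp C g f = g . f, f first)\<close>

record ('o,'m) cat =
  cob :: "'o set"
  car :: "'m set"
  cdom :: "'m \<Rightarrow> 'o"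
  ccod :: "'m \<Rightarrow> 'o"
  cid :: "'o \<Rightarrow> 'm"
  ccomp :: "'m \<Rightarrow> 'm \<Rightarrow> 'm"

definition hom :: "('o,'m) cat \<Rightarrow> 'o \<Rightarrow> 'o \<Rightarrow> 'm set" where
  "hom C x y = {f. f \<in> car C \<and> cdom C f = x \<and> ccod C f = y}"

definition category :: "('o,'m) cat \<Rightarrow> bool" where
  "category C \<equiv>
    (\<forall>x\<in>cob C. cid C x \<in> hom C x x) \<and>
    (\<forall>f\<in>car C. cdom C f \<in> cob C \<and> ccod C f \<in> cob C) \<and>
    (\<forall>f\<in>car C. \<forall>g\<in>car C. cdom C g = ccod C f \<longrightarrow>
        ccomp C g f \<in> hom C (cdom C f) (ccod C g)) \<and>
    (\<forall>f\<in>car C. ccomp C f (cid C (cdom C f)) = f \<and> ccomp C (cid C (ccod C f)) f = f) \<and>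
    (\<forall>f\<in>car C. \<forall>g\<in>car C. \<forall>h\<in>car C. cdom C g = ccod C f \<and> cdom C h = ccod C g \<longrightarrow>
        ccomp C h (ccomp C g f) = ccomp C (ccomp C h g) f)"

definition iso :: "('o,'m) cat \<Rightarrow> 'm \<Rightarrow> bool" where
  "iso C f \<equiv> f \<in> car C \<and> (\<exists>g\<in>hom C (ccod C f) (cdom C f).
      ccomp C g f = cid C (cdom C f) \<and> ccomp C f g = cid C (ccod C f))"

definition cinv :: "('o,'m) cat \<Rightarrow> 'm \<Rightarrow> 'm" where
  "cinv C f = (SOME g. g \<in> hom C (ccod C f) (cdom C f) \<and>
      ccomp C g f = cid C (cdom C f) \<and> ccomp C f g = cid C (ccod C f))"

text \<open>tob/tar: tensor on objects/arrows, tun: unit, tal x y z : (x*y)*z -> x*(y*z),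
  tla x : I*x -> x, tra x : x*I -> x.\<close>

record ('o,'m) moncat =
  tob :: "'o \<Rightarrow> 'o \<Rightarrow> 'o"
  tar :: "'m \<Rightarrow> 'm \<Rightarrow> 'm"
  tun :: "'o"
  tal :: "'o \<Rightarrow> 'o \<Rightarrow> 'o \<Rightarrow> 'm"
  tla :: "'o \<Rightarrow> 'm"
  tra :: "'o \<Rightarrow> 'm"

definition monoidal :: "('o,'m) cat \<Rightarrow> ('o,'m) moncat \<Rightarrow> bool" where
  "monoidal C M \<equiv>
   (let cp = ccomp C; i = cid C; ob = cob C; ar = car C; dm = cdom C; cd = ccod C;
        to = tob M; ta = tar M; u = tun M; \<alpha> = tal M; l = tla M; r = tra M in
    u \<in> ob \<and>
    (\<forall>x\<in>ob. \<forall>y\<in>ob. to x y \<in> ob) \<and>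
    (\<forall>f\<in>ar. \<forall>g\<in>ar. ta f g \<in> hom C (to (dm f) (dm g)) (to (cd f) (cd g))) \<and>
    (\<forall>x\<in>ob. \<forall>y\<in>ob. ta (i x) (i y) = i (to x y)) \<and>
    (\<forall>f\<in>ar. \<forall>f'\<in>ar. \<forall>g\<in>ar. \<forall>g'\<in>ar. dm f' = cd f \<and> dm g' = cd g \<longrightarrow>
        ta (cp f' f) (cp g' g) = cp (ta f' g') (ta f g)) \<and>
    (\<forall>x\<in>ob. \<forall>y\<in>ob. \<forall>z\<in>ob. \<alpha> x y z \<in> hom C (to (to x y) z) (to x (to y z)) \<and> iso C (\<alpha> x y z)) \<and>
    (\<forall>f\<in>ar. \<forall>g\<in>ar. \<forall>h\<in>ar.
        cp (\<alpha> (cd f) (cd g) (cd h)) (ta (ta f g) h) = cp (ta f (ta g h)) (\<alpha> (dm f) (dm g) (dm h))) \<and>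
    (\<forall>x\<in>ob. l x \<in> hom C (to u x) x \<and> iso C (l x) \<and> r x \<in> hom C (to x u) x \<and> iso C (r x)) \<and>
    (\<forall>f\<in>ar. cp f (l (dm f)) = cp (l (cd f)) (ta (i u) f) \<and>
             cp f (r (dm f)) = cp (r (cd f)) (ta f (i u))) \<and>
    (\<forall>w\<in>ob. \<forall>x\<in>ob. \<forall>y\<in>ob. \<forall>z\<in>ob.
        cp (\<alpha> w x (to y z)) (\<alpha> (to w x) y z)
      = cp (ta (i w) (\<alpha> x y z)) (cp (\<alpha> w (to x y) z) (ta (\<alpha> w x y) (i z)))) \<and>
    (\<forall>x\<in>ob. \<forall>y\<in>ob. cp (ta (i x) (l y)) (\<alpha> x u y) = ta (r x) (i y)))"

text \<open>H = (circ, bot), V = (bullet, 1); z x y a b : (x.y)o(a.b) -> (xoa).(yob);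
  nu : bot -> bot.bot, vp : 1o1 -> 1, io : bot -> 1.\<close>

definition duoidal :: "('o,'m) cat \<Rightarrow> ('o,'m) moncat \<Rightarrow> ('o,'m) moncat \<Rightarrow>
    ('o \<Rightarrow> 'o \<Rightarrow> 'o \<Rightarrow> 'o \<Rightarrow> 'm) \<Rightarrow> 'm \<Rightarrow> 'm \<Rightarrow> 'm \<Rightarrow> bool" where
  "duoidal C H V z nu vp io \<equiv>
   category C \<and> monoidal C H \<and> monoidal C V \<and>
   (let cp = ccomp C; i = cid C; ob = cob C; ar = car C; dm = cdom C; cd = ccod C;
        ho = tob H; ha = tar H; bt = tun H; h\<alpha> = tal H; hl = tla H; hr = tra H;
        vo = tob V; va = tar V; one = tun V; v\<alpha> = tal V; vl = tla V; vr = tra V in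
    (\<forall>x\<in>ob. \<forall>y\<in>ob. \<forall>a\<in>ob. \<forall>b\<in>ob.
        z x y a b \<in> hom C (ho (vo x y) (vo a b)) (vo (ho x a) (ho y b))) \<and>
    (\<forall>f\<in>ar. \<forall>g\<in>ar. \<forall>h\<in>ar. \<forall>k\<in>ar.
        cp (z (cd f) (cd g) (cd h) (cd k)) (ha (va f g) (va h k))
      = cp (va (ha f h) (ha g k)) (z (dm f) (dm g) (dm h) (dm k))) \<and>
    nu \<in> hom C bt (vo bt bt) \<and> vp \<in> hom C (ho one one) one \<and> io \<in> hom C bt one \<and>
    \<comment> \<open>(1, vp, io) is a monoid in (D, circ, bot)\<close>
    cp vp (ha vp (i one)) = cp vp (cp (ha (i one) vp) (h\<alpha> one one one)) \<and>
    cp vp (ha io (i one)) = hl one \<and>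
    cp vp (ha (i one) io) = hr one \<and>
    \<comment> \<open>(bot, nu, io) is a comonoid in (D, bullet, 1)\<close>
    cp (v\<alpha> bt bt bt) (cp (va nu (i bt)) nu) = cp (va (i bt) nu) nu \<and>
    cp (va io (i bt)) nu = cinv C (vl bt) \<and>
    cp (va (i bt) io) nu = cinv C (vr bt) \<and>
    \<comment> \<open>compatibility axioms\<close>
    (\<forall>x\<in>ob. \<forall>y\<in>ob. \<forall>a\<in>ob. \<forall>b\<in>ob. \<forall>c\<in>ob. \<forall>d\<in>ob.
        cp (va (h\<alpha> x a c) (h\<alpha> y b d)) (cp (z (ho x a) (ho y b) c d) (ha (z x y a b) (i (vo c d))))
      = cp (z x y (ho a c) (ho b d)) (cp (ha (i (vo x y)) (z a b c d)) (h\<alpha> (vo x y) (vo a b) (vo c d)))) \<and>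
    (\<forall>x\<in>ob. \<forall>y\<in>ob. \<forall>a\<in>ob. \<forall>b\<in>ob. \<forall>c\<in>ob. \<forall>d\<in>ob.
        cp (v\<alpha> (ho x y) (ho a b) (ho c d)) (cp (va (z x a y b) (i (ho c d))) (z (vo x a) c (vo y b) d))
      = cp (va (i (ho x y)) (z a c b d)) (cp (z x (vo a c) y (vo b d)) (ha (v\<alpha> x a c) (v\<alpha> y b d)))) \<and>
    (\<forall>a\<in>ob. \<forall>b\<in>ob. cp (z bt bt a b) (ha nu (i (vo a b)))
        = cp (va (cinv C (hl a)) (cinv C (hl b))) (hl (vo a b))) \<and>
    (\<forall>a\<in>ob. \<forall>b\<in>ob. cp (z a b bt bt) (ha (i (vo a b)) nu)
        = cp (va (cinv C (hr a)) (cinv C (hr b))) (hr (vo a b))) \<and>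
    (\<forall>a\<in>ob. \<forall>b\<in>ob. cp (va vp (i (ho a b))) (z one a one b)
        = cp (cinv C (vl (ho a b))) (ha (vl a) (vl b))) \<and>
    (\<forall>a\<in>ob. \<forall>b\<in>ob. cp (va (i (ho a b)) vp) (z a one b one)
        = cp (cinv C (vr (ho a b))) (ha (vr a) (vr b))))"

definition normal_duoidal :: "('o,'m) cat \<Rightarrow> ('o,'m) moncat \<Rightarrow> ('o,'m) moncat \<Rightarrow>
    ('o \<Rightarrow> 'o \<Rightarrow> 'o \<Rightarrow> 'o \<Rightarrow> 'm) \<Rightarrow> 'm \<Rightarrow> 'm \<Rightarrow> 'm \<Rightarrow> bool" where
  "normal_duoidal C H V z nu vp io \<equiv> duoidal C H V z nu vp io \<and> iso C io"

record ('o,'m) monad =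
  mfo :: "'o \<Rightarrow> 'o"
  mfa :: "'m \<Rightarrow> 'm"
  mmu :: "'o \<Rightarrow> 'm"
  meta :: "'o \<Rightarrow> 'm"

definition endofunctor :: "('o,'m) cat \<Rightarrow> ('o \<Rightarrow> 'o) \<Rightarrow> ('m \<Rightarrow> 'm) \<Rightarrow> bool" where
  "endofunctor C Fo Fa \<equiv>
    (\<forall>x\<in>cob C. Fo x \<in> cob C) \<and>
    (\<forall>f\<in>car C. Fa f \<in> hom C (Fo (cdom C f)) (Fo (ccod C f))) \<and>
    (\<forall>x\<in>cob C. Fa (cid C x) = cid C (Fo x)) \<and>
    (\<forall>f\<in>car C. \<forall>g\<in>car C. cdom C g = ccod C f \<longrightarrow> Fa (ccomp C g f) = ccomp C (Fa g) (Fa f))"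

definition monad :: "('o,'m) cat \<Rightarrow> ('o,'m) monad \<Rightarrow> bool" where
  "monad C T \<equiv>
   (let cp = ccomp C; i = cid C; Fo = mfo T; Fa = mfa T; \<mu> = mmu T; \<eta> = meta T in
    endofunctor C Fo Fa \<and>
    (\<forall>x\<in>cob C. \<mu> x \<in> hom C (Fo (Fo x)) (Fo x) \<and> \<eta> x \<in> hom C x (Fo x)) \<and>
    (\<forall>f\<in>car C. cp (\<mu> (ccod C f)) (Fa (Fa f)) = cp (Fa f) (\<mu> (cdom C f)) \<and>
               cp (\<eta> (ccod C f)) f = cp (Fa f) (\<eta> (cdom C f))) \<and>
    (\<forall>x\<in>cob C. cp (\<mu> x) (Fa (\<mu> x)) = cp (\<mu> x) (\<mu> (Fo x)) \<and>
               cp (\<mu> x) (\<eta> (Fo x)) = i (Fo x) \<and>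
               cp (\<mu> x) (Fa (\<eta> x)) = i (Fo x)))"

text \<open>Bimonad on (C, M): monad with opmonoidal structure T2 x y : T(x*y) -> Tx*Ty, T0 : TI -> I,
  such that mu and eta are opmonoidal natural transformations.\<close>

definition bimonad :: "('o,'m) cat \<Rightarrow> ('o,'m) moncat \<Rightarrow> ('o,'m) monad \<Rightarrow>
    ('o \<Rightarrow> 'o \<Rightarrow> 'm) \<Rightarrow> 'm \<Rightarrow> bool" where
  "bimonad C M T T2 T0 \<equiv>
   monad C T \<and> monoidal C M \<and>
   (let cp = ccomp C; i = cid C; ob = cob C; ar = car C; dm = cdom C; cd = ccod C;
        Fo = mfo T; Fa = mfa T; \<mu> = mmu T; \<eta> = meta T;
        to = tob M; ta = tar M; u = tun M; \<alpha> = tal M; l = tla M; r = tra M in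
    (\<forall>x\<in>ob. \<forall>y\<in>ob. T2 x y \<in> hom C (Fo (to x y)) (to (Fo x) (Fo y))) \<and>
    T0 \<in> hom C (Fo u) u \<and>
    (\<forall>f\<in>ar. \<forall>g\<in>ar. cp (T2 (cd f) (cd g)) (Fa (ta f g)) = cp (ta (Fa f) (Fa g)) (T2 (dm f) (dm g))) \<and>
    (\<forall>x\<in>ob. \<forall>y\<in>ob. \<forall>z\<in>ob.
        cp (\<alpha> (Fo x) (Fo y) (Fo z)) (cp (ta (T2 x y) (i (Fo z))) (T2 (to x y) z))
      = cp (ta (i (Fo x)) (T2 y z)) (cp (T2 x (to y z)) (Fa (\<alpha> x y z)))) \<and>
    (\<forall>x\<in>ob. cp (ta T0 (i (Fo x))) (T2 u x) = cp (cinv C (l (Fo x))) (Fa (l x)) \<and>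
             cp (ta (i (Fo x)) T0) (T2 x u) = cp (cinv C (r (Fo x))) (Fa (r x))) \<and>
    (\<forall>x\<in>ob. \<forall>y\<in>ob.
        cp (T2 x y) (\<mu> (to x y)) = cp (ta (\<mu> x) (\<mu> y)) (cp (T2 (Fo x) (Fo y)) (Fa (T2 x y))) \<and>
        cp (T2 x y) (\<eta> (to x y)) = ta (\<eta> x) (\<eta> y)) \<and>
    cp T0 (\<mu> u) = cp T0 (Fa T0) \<and>
    cp T0 (\<eta> u) = i u)"

definition double_opmonoidal :: "('o,'m) cat \<Rightarrow> ('o,'m) moncat \<Rightarrow> ('o,'m) moncat \<Rightarrow>
    ('o \<Rightarrow> 'o \<Rightarrow> 'o \<Rightarrow> 'o \<Rightarrow> 'm) \<Rightarrow> 'm \<Rightarrow> 'm \<Rightarrow> 'm \<Rightarrow> ('o,'m) monad \<Rightarrow>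
    ('o \<Rightarrow> 'o \<Rightarrow> 'm) \<Rightarrow> 'm \<Rightarrow> ('o \<Rightarrow> 'o \<Rightarrow> 'm) \<Rightarrow> 'm \<Rightarrow> bool" where
  "double_opmonoidal C H V z nu vp io T T2h T0h T2v T0v \<equiv>
   bimonad C V T T2v T0v \<and> bimonad C H T T2h T0h \<and>
   (let cp = ccomp C; Fo = mfo T; Fa = mfa T; ho = tob H; ha = tar H; vo = tob V; va = tar V;
        bt = tun H; one = tun V in
    cp T0v (Fa vp) = cp vp (cp (ha T0v T0v) (T2h one one)) \<and>
    cp (va T0h T0h) (cp (T2v bt bt) (Fa nu)) = cp nu T0h \<and>
    cp T0v (Fa io) = cp io T0h \<and>
    (\<forall>a\<in>cob C. \<forall>b\<in>cob C. \<forall>c\<in>cob C. \<forall>d\<in>cob C.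
        cp (z (Fo a) (Fo b) (Fo c) (Fo d)) (cp (ha (T2v a b) (T2v c d)) (T2h (vo a b) (vo c d)))
      = cp (va (T2h a c) (T2h b d)) (cp (T2v (ho a c) (ho b d)) (Fa (z a b c d)))))"

text \<open>dist_ll a b c : a o (b . c) -> (a o b) . c, etc.  The isomorphism 1 o c ~ c is
  lambda^o_c . (io^-1 o id_c), and c o 1 ~ c is rho^o_c . (id_c o io^-1).\<close>

definition dist_ll :: "('o,'m) cat \<Rightarrow> ('o,'m) moncat \<Rightarrow> ('o,'m) moncat \<Rightarrow>
    ('o \<Rightarrow> 'o \<Rightarrow> 'o \<Rightarrow> 'o \<Rightarrow> 'm) \<Rightarrow> 'm \<Rightarrow> 'o \<Rightarrow> 'o \<Rightarrow> 'o \<Rightarrow> 'm" where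
  "dist_ll C H V z io a b c =
    ccomp C (tar V (cid C (tob H a b)) (ccomp C (tla H c) (tar H (cinv C io) (cid C c))))
     (ccomp C (z a (tun V) b c) (tar H (cinv C (tra V a)) (cid C (tob V b c))))"

definition dist_lr :: "('o,'m) cat \<Rightarrow> ('o,'m) moncat \<Rightarrow> ('o,'m) moncat \<Rightarrow>
    ('o \<Rightarrow> 'o \<Rightarrow> 'o \<Rightarrow> 'o \<Rightarrow> 'm) \<Rightarrow> 'm \<Rightarrow> 'o \<Rightarrow> 'o \<Rightarrow> 'o \<Rightarrow> 'm" where
  "dist_lr C H V z io a b c =
    ccomp C (tar V (ccomp C (tla H b) (tar H (cinv C io) (cid C b))) (cid C (tob H a c)))
     (ccomp C (z (tun V) a b c) (tar H (cinv C (tla V a)) (cid C (tob V b c))))"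

definition dist_rl :: "('o,'m) cat \<Rightarrow> ('o,'m) moncat \<Rightarrow> ('o,'m) moncat \<Rightarrow>
    ('o \<Rightarrow> 'o \<Rightarrow> 'o \<Rightarrow> 'o \<Rightarrow> 'm) \<Rightarrow> 'm \<Rightarrow> 'o \<Rightarrow> 'o \<Rightarrow> 'o \<Rightarrow> 'm" where
  "dist_rl C H V z io a b c =
    ccomp C (tar V (cid C (tob H b a)) (ccomp C (tra H c) (tar H (cid C c) (cinv C io))))
     (ccomp C (z b c a (tun V)) (tar H (cid C (tob V b c)) (cinv C (tra V a))))"

definition dist_rr :: "('o,'m) cat \<Rightarrow> ('o,'m) moncat \<Rightarrow> ('o,'m) moncat \<Rightarrow>
    ('o \<Rightarrow> 'o \<Rightarrow> 'o \<Rightarrow> 'o \<Rightarrow> 'm) \<Rightarrow> 'm \<Rightarrow> 'o \<Rightarrow> 'o \<Rightarrow> 'o \<Rightarrow> 'm" where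
  "dist_rr C H V z io a b c =
    ccomp C (tar V (ccomp C (tra H b) (tar H (cid C b) (cinv C io))) (cid C (tob H c a)))
     (ccomp C (z b c (tun V) a) (tar H (cid C (tob V b c)) (cinv C (tla V a))))"

end

theory Submission
  imports Defs
begin

text \<open>Each linear distributor has the shape \<open>(p \<bullet> q) \<cdot> \<zeta> \<cdot> (r \<circ> s)\<close>, where
  \<open>p, q, r, s\<close> are identities or unit isomorphisms (transported along \<open>\<iota>\<close>).
  The opmonoidal structures of \<open>T\<close> commute with \<open>\<zeta>\<close> by the compatibility axiom, with
  \<open>\<circ>\<close> and \<open>\<bullet>\<close> of arrows by naturality, and with the unit isomorphisms by the counit
  laws of the opmonoidal structures together with \<open>T\<^sup>\<bullet>\<^sub>0 \<cdot> T\<iota> = \<iota> \<cdot> T\<^sup>\<circ>\<^sub>0\<close>.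
  Pasting these squares gives the four lifting equations.\<close>

locale category_context =
  fixes C :: "('o,'m) cat"
  assumes category: "category C"
begin

abbreviation cp where "cp \<equiv> ccomp C"
abbreviation dm where "dm \<equiv> cdom C"
abbreviation cd where "cd \<equiv> ccod C"
abbreviation ci where "ci \<equiv> cid C"

lemma cid_car [simp]: "x \<in> cob C \<Longrightarrow> ci x \<in> car C"
  and cid_dom [simp]: "x \<in> cob C \<Longrightarrow> dm (ci x) = x"
  and cid_cod [simp]: "x \<in> cob C \<Longrightarrow> cd (ci x) = x"
  using category unfolding category_def hom_def by auto

lemma dom_ob [simp]: "f \<in> car C \<Longrightarrow> dm f \<in> cob C"
  and cod_ob [simp]: "f \<in> car C \<Longrightarrow> cd f \<in> cob C"
  using category unfolding category_def by auto

lemma comp_car [simp]: "f \<in> car C \<Longrightarrow> g \<in> car C \<Longrightarrow> dm g = cd f \<Longrightarrow> cp g f \<in> car C"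
  and comp_dom [simp]: "f \<in> car C \<Longrightarrow> g \<in> car C \<Longrightarrow> dm g = cd f \<Longrightarrow> dm (cp g f) = dm f"
  and comp_cod [simp]: "f \<in> car C \<Longrightarrow> g \<in> car C \<Longrightarrow> dm g = cd f \<Longrightarrow> cd (cp g f) = cd g"
  using category unfolding category_def hom_def by auto

lemma comp_cid_right [simp]: "f \<in> car C \<Longrightarrow> x = dm f \<Longrightarrow> cp f (ci x) = f"
  and comp_cid_left [simp]: "f \<in> car C \<Longrightarrow> x = cd f \<Longrightarrow> cp (ci x) f = f"
  using category unfolding category_def by auto

lemma comp_assoc [simp]:
  "f \<in> car C \<Longrightarrow> g \<in> car C \<Longrightarrow> h \<in> car C \<Longrightarrow> dm g = cd f \<Longrightarrow> dm h = cd g \<Longrightarrow>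
   cp (cp h g) f = cp h (cp g f)"
  using category unfolding category_def by auto

lemma cinv_is_inverse:
  assumes "iso C f"
  shows "cinv C f \<in> car C \<and> dm (cinv C f) = cd f \<and> cd (cinv C f) = dm f \<and>
    cp (cinv C f) f = ci (dm f) \<and> cp f (cinv C f) = ci (cd f)"
proof -
  have "\<exists>g. g \<in> hom C (cd f) (dm f) \<and> cp g f = ci (dm f) \<and> cp f g = ci (cd f)"
    using assms unfolding iso_def by blast
  from someI_ex [OF this] show ?thesis
    unfolding cinv_def hom_def by auto
qed

lemma iso_car: "iso C f \<Longrightarrow> f \<in> car C"
  unfolding iso_def by auto

lemma cinv_car [simp]: "iso C f \<Longrightarrow> cinv C f \<in> car C"
  and cinv_dom [simp]: "iso C f \<Longrightarrow> dm (cinv C f) = cd f"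
  and cinv_cod [simp]: "iso C f \<Longrightarrow> cd (cinv C f) = dm f"
  and cinv_comp [simp]: "iso C f \<Longrightarrow> cp (cinv C f) f = ci (dm f)"
  and comp_cinv [simp]: "iso C f \<Longrightarrow> cp f (cinv C f) = ci (cd f)"
  using cinv_is_inverse by auto

lemma cinv_comp_cancel [simp]:
  "iso C f \<Longrightarrow> k \<in> car C \<Longrightarrow> cd k = dm f \<Longrightarrow> cp (cinv C f) (cp f k) = k"
  by (metis comp_assoc cinv_car cinv_cod cinv_dom cinv_comp comp_cid_left iso_car)

lemma comp_cinv_cancel [simp]:
  "iso C f \<Longrightarrow> k \<in> car C \<Longrightarrow> cd k = cd f \<Longrightarrow> cp f (cp (cinv C f) k) = k"
  by (metis comp_assoc cinv_car cinv_cod cinv_dom comp_cinv comp_cid_left iso_car)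

end

locale monoidal_context = category_context C for C :: "('o,'m) cat" +
  fixes M :: "('o,'m) moncat"
  assumes monoidal: "monoidal C M"
begin

abbreviation to where "to \<equiv> tob M"
abbreviation ta where "ta \<equiv> tar M"

lemma tob_ob [simp]: "x \<in> cob C \<Longrightarrow> y \<in> cob C \<Longrightarrow> to x y \<in> cob C"
  and tun_ob [simp]: "tun M \<in> cob C"
  using monoidal unfolding monoidal_def Let_def by auto

lemma tar_car [simp]: "f \<in> car C \<Longrightarrow> g \<in> car C \<Longrightarrow> ta f g \<in> car C"
  and tar_dom [simp]: "f \<in> car C \<Longrightarrow> g \<in> car C \<Longrightarrow> dm (ta f g) = to (dm f) (dm g)"
  and tar_cod [simp]: "f \<in> car C \<Longrightarrow> g \<in> car C \<Longrightarrow> cd (ta f g) = to (cd f) (cd g)"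
  using monoidal unfolding monoidal_def Let_def hom_def by auto

lemma tar_cid [simp]: "x \<in> cob C \<Longrightarrow> y \<in> cob C \<Longrightarrow> ta (ci x) (ci y) = ci (to x y)"
  using monoidal unfolding monoidal_def Let_def by auto

lemma interchange:
  "f \<in> car C \<Longrightarrow> f' \<in> car C \<Longrightarrow> g \<in> car C \<Longrightarrow> g' \<in> car C \<Longrightarrow>
   dm f' = cd f \<Longrightarrow> dm g' = cd g \<Longrightarrow> ta (cp f' f) (cp g' g) = cp (ta f' g') (ta f g)"
  using monoidal unfolding monoidal_def Let_def by auto

lemma tla_car [simp]: "x \<in> cob C \<Longrightarrow> tla M x \<in> car C"
  and tla_dom [simp]: "x \<in> cob C \<Longrightarrow> dm (tla M x) = to (tun M) x"
  and tla_cod [simp]: "x \<in> cob C \<Longrightarrow> cd (tla M x) = x"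
  and tla_iso [simp]: "x \<in> cob C \<Longrightarrow> iso C (tla M x)"
  and tra_car [simp]: "x \<in> cob C \<Longrightarrow> tra M x \<in> car C"
  and tra_dom [simp]: "x \<in> cob C \<Longrightarrow> dm (tra M x) = to x (tun M)"
  and tra_cod [simp]: "x \<in> cob C \<Longrightarrow> cd (tra M x) = x"
  and tra_iso [simp]: "x \<in> cob C \<Longrightarrow> iso C (tra M x)"
  using monoidal unfolding monoidal_def Let_def hom_def by auto

lemma tar_comp_cid:
  "f \<in> car C \<Longrightarrow> f' \<in> car C \<Longrightarrow> dm f' = cd f \<Longrightarrow> x \<in> cob C \<Longrightarrow>
   ta (cp f' f) (ci x) = cp (ta f' (ci x)) (ta f (ci x))"
  by (metis interchange cid_car cid_cod cid_dom comp_cid_left)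

lemma tar_cid_comp:
  "f \<in> car C \<Longrightarrow> f' \<in> car C \<Longrightarrow> dm f' = cd f \<Longrightarrow> x \<in> cob C \<Longrightarrow>
   ta (ci x) (cp f' f) = cp (ta (ci x) f') (ta (ci x) f)"
  by (metis interchange cid_car cid_cod cid_dom comp_cid_left)

lemma tar_split_right_first:
  "f \<in> car C \<Longrightarrow> g \<in> car C \<Longrightarrow> ta f g = cp (ta f (ci (cd g))) (ta (ci (dm f)) g)"
  by (metis interchange cod_ob dom_ob cid_car cid_cod cid_dom comp_cid_left comp_cid_right)

lemma tar_split_left_first:
  "f \<in> car C \<Longrightarrow> g \<in> car C \<Longrightarrow> ta f g = cp (ta (ci (cd f)) g) (ta f (ci (dm g)))"
  by (metis interchange cod_ob dom_ob cid_car cid_cod cid_dom comp_cid_left comp_cid_right)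

end

locale monad_context = category_context C for C :: "('o,'m) cat" +
  fixes T :: "('o,'m) monad"
  assumes monad: "monad C T"
begin

abbreviation F where "F \<equiv> mfo T"
abbreviation Fa where "Fa \<equiv> mfa T"

lemma endofunctor: "endofunctor C F Fa"
  using monad unfolding monad_def Let_def by (elim conjE)

lemma F_ob [simp]: "x \<in> cob C \<Longrightarrow> F x \<in> cob C"
  and Fa_car [simp]: "f \<in> car C \<Longrightarrow> Fa f \<in> car C"
  and Fa_dom [simp]: "f \<in> car C \<Longrightarrow> dm (Fa f) = F (dm f)"
  and Fa_cod [simp]: "f \<in> car C \<Longrightarrow> cd (Fa f) = F (cd f)"
  and Fa_cid [simp]: "x \<in> cob C \<Longrightarrow> Fa (ci x) = ci (F x)"
  and Fa_comp [simp]: "f \<in> car C \<Longrightarrow> g \<in> car C \<Longrightarrow> dm g = cd f \<Longrightarrow> Fa (cp g f) = cp (Fa g) (Fa f)"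
  using endofunctor unfolding endofunctor_def hom_def by auto

end

locale bimonad_context = monoidal_context C M + monad_context C T
  for C :: "('o,'m) cat" and M :: "('o,'m) moncat" and T :: "('o,'m) monad" +
  fixes T2 :: "'o \<Rightarrow> 'o \<Rightarrow> 'm" and T0 :: 'm
  assumes bimonad: "bimonad C M T T2 T0"
begin

lemma T2_hom: "\<forall>x\<in>cob C. \<forall>y\<in>cob C. T2 x y \<in> hom C (F (to x y)) (to (F x) (F y))"
  and T0_hom: "T0 \<in> hom C (F (tun M)) (tun M)"
  and T2_natural_all: "\<forall>f\<in>car C. \<forall>g\<in>car C.
    cp (T2 (cd f) (cd g)) (Fa (ta f g)) = cp (ta (Fa f) (Fa g)) (T2 (dm f) (dm g))"
  and T2_counit_all: "\<forall>x\<in>cob C.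
    cp (ta T0 (ci (F x))) (T2 (tun M) x) = cp (cinv C (tla M (F x))) (Fa (tla M x)) \<and>
    cp (ta (ci (F x)) T0) (T2 x (tun M)) = cp (cinv C (tra M (F x))) (Fa (tra M x))"
  using bimonad unfolding bimonad_def Let_def by blast+

lemma T2_car [simp]: "x \<in> cob C \<Longrightarrow> y \<in> cob C \<Longrightarrow> T2 x y \<in> car C"
  and T2_dom [simp]: "x \<in> cob C \<Longrightarrow> y \<in> cob C \<Longrightarrow> dm (T2 x y) = F (to x y)"
  and T2_cod [simp]: "x \<in> cob C \<Longrightarrow> y \<in> cob C \<Longrightarrow> cd (T2 x y) = to (F x) (F y)"
  and T0_car [simp]: "T0 \<in> car C"
  and T0_dom [simp]: "dm T0 = F (tun M)"
  and T0_cod [simp]: "cd T0 = tun M"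
  using T2_hom T0_hom unfolding hom_def by auto

lemma T2_natural:
  "f \<in> car C \<Longrightarrow> g \<in> car C \<Longrightarrow>
   cp (T2 (cd f) (cd g)) (Fa (ta f g)) = cp (ta (Fa f) (Fa g)) (T2 (dm f) (dm g))"
  using T2_natural_all by blast

lemma Fa_tla:
  assumes "x \<in> cob C"
  shows "Fa (tla M x) = cp (tla M (F x)) (cp (ta T0 (ci (F x))) (T2 (tun M) x))"
  using T2_counit_all assms by simp

lemma Fa_tra:
  assumes "x \<in> cob C"
  shows "Fa (tra M x) = cp (tra M (F x)) (cp (ta (ci (F x)) T0) (T2 x (tun M)))"
  using T2_counit_all assms by simp

lemma T2_Fa_cinv_tla:
  assumes "x \<in> cob C"
  shows "cp (ta T0 (ci (F x))) (cp (T2 (tun M) x) (Fa (cinv C (tla M x)))) = cinv C (tla M (F x))"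
proof -
  have "cp (ta T0 (ci (F x))) (cp (T2 (tun M) x) (Fa (cinv C (tla M x))))
      = cp (cp (ta T0 (ci (F x))) (T2 (tun M) x)) (Fa (cinv C (tla M x)))"
    using assms by simp
  also have "\<dots> = cp (cinv C (tla M (F x))) (cp (Fa (tla M x)) (Fa (cinv C (tla M x))))"
    using T2_counit_all assms by simp
  also have "\<dots> = cinv C (tla M (F x))"
    using assms by (simp flip: Fa_comp)
  finally show ?thesis .
qed

lemma T2_Fa_cinv_tra:
  assumes "x \<in> cob C"
  shows "cp (ta (ci (F x)) T0) (cp (T2 x (tun M)) (Fa (cinv C (tra M x)))) = cinv C (tra M (F x))"
proof -
  have "cp (ta (ci (F x)) T0) (cp (T2 x (tun M)) (Fa (cinv C (tra M x))))
      = cp (cp (ta (ci (F x)) T0) (T2 x (tun M))) (Fa (cinv C (tra M x)))"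
    using assms by simp
  also have "\<dots> = cp (cinv C (tra M (F x))) (cp (Fa (tra M x)) (Fa (cinv C (tra M x))))"
    using T2_counit_all assms by simp
  also have "\<dots> = cinv C (tra M (F x))"
    using assms by (simp flip: Fa_comp)
  finally show ?thesis .
qed

end

locale double_opmonoidal_context =
  fixes C :: "('o,'m) cat" and H V :: "('o,'m) moncat"
    and z :: "'o \<Rightarrow> 'o \<Rightarrow> 'o \<Rightarrow> 'o \<Rightarrow> 'm" and nu vp io :: 'm
    and T :: "('o,'m) monad" and T2h T2v :: "'o \<Rightarrow> 'o \<Rightarrow> 'm" and T0h T0v :: 'm
  assumes normal_duoidal: "normal_duoidal C H V z nu vp io"
    and double_opmonoidal: "double_opmonoidal C H V z nu vp io T T2h T0h T2v T0v"
begin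

abbreviation ho where "ho \<equiv> tob H"
abbreviation ha where "ha \<equiv> tar H"
abbreviation vo where "vo \<equiv> tob V"
abbreviation va where "va \<equiv> tar V"
abbreviation bt where "bt \<equiv> tun H"
abbreviation one where "one \<equiv> tun V"

lemma category_C: "category C"
  using normal_duoidal unfolding normal_duoidal_def duoidal_def by (elim conjE)

lemma monoidal_H: "monoidal C H"
  using normal_duoidal unfolding normal_duoidal_def duoidal_def by (elim conjE)

lemma monoidal_V: "monoidal C V"
  using normal_duoidal unfolding normal_duoidal_def duoidal_def by (elim conjE)

lemma io_iso [simp]: "iso C io"
  using normal_duoidal unfolding normal_duoidal_def by (elim conjE)

lemma io_hom: "io \<in> hom C (tun H) (tun V)"
  using normal_duoidal unfolding normal_duoidal_def duoidal_def Let_def by (elim conjE)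

lemma z_hom: "\<forall>x\<in>cob C. \<forall>y\<in>cob C. \<forall>a\<in>cob C. \<forall>b\<in>cob C.
    z x y a b \<in> hom C (tob H (tob V x y) (tob V a b)) (tob V (tob H x a) (tob H y b))"
  using normal_duoidal unfolding normal_duoidal_def duoidal_def Let_def by (elim conjE)

lemma z_natural_all: "\<forall>f\<in>car C. \<forall>g\<in>car C. \<forall>h\<in>car C. \<forall>k\<in>car C.
    ccomp C (z (ccod C f) (ccod C g) (ccod C h) (ccod C k)) (tar H (tar V f g) (tar V h k))
    = ccomp C (tar V (tar H f h) (tar H g k)) (z (cdom C f) (cdom C g) (cdom C h) (cdom C k))"
  using normal_duoidal unfolding normal_duoidal_def duoidal_def Let_def by (elim conjE)

lemma bimonad_H: "bimonad C H T T2h T0h"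
  using double_opmonoidal unfolding double_opmonoidal_def by (elim conjE)

lemma bimonad_V: "bimonad C V T T2v T0v"
  using double_opmonoidal unfolding double_opmonoidal_def by (elim conjE)

lemma T0_io: "ccomp C T0v (mfa T io) = ccomp C io T0h"
  using double_opmonoidal unfolding double_opmonoidal_def Let_def by (elim conjE)

lemma T2_zeta_all: "\<forall>a\<in>cob C. \<forall>b\<in>cob C. \<forall>c\<in>cob C. \<forall>d\<in>cob C.
    ccomp C (z (mfo T a) (mfo T b) (mfo T c) (mfo T d))
      (ccomp C (tar H (T2v a b) (T2v c d)) (T2h (tob V a b) (tob V c d)))
    = ccomp C (tar V (T2h a c) (T2h b d))
      (ccomp C (T2v (tob H a c) (tob H b d)) (mfa T (z a b c d)))"
  using double_opmonoidal unfolding double_opmonoidal_def Let_def by (elim conjE)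

sublocale category_context C
  by (fact category_context.intro [OF category_C])

sublocale monad_context C T
  using bimonad_H unfolding bimonad_def by unfold_locales (elim conjE)

sublocale H: bimonad_context C H T T2h T0h
  using monoidal_H bimonad_H by unfold_locales

sublocale V: bimonad_context C V T T2v T0v
  using monoidal_V bimonad_V by unfold_locales

lemma io_car [simp]: "io \<in> car C"
  and io_dom [simp]: "dm io = bt"
  and io_cod [simp]: "cd io = one"
  using io_hom unfolding hom_def by auto

lemma z_car [simp]:
    "x \<in> cob C \<Longrightarrow> y \<in> cob C \<Longrightarrow> a \<in> cob C \<Longrightarrow> b \<in> cob C \<Longrightarrow> z x y a b \<in> car C"
  and z_dom [simp]:
    "x \<in> cob C \<Longrightarrow> y \<in> cob C \<Longrightarrow> a \<in> cob C \<Longrightarrow> b \<in> cob C \<Longrightarrow> dm (z x y a b) = ho (vo x y) (vo a b)"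
  and z_cod [simp]:
    "x \<in> cob C \<Longrightarrow> y \<in> cob C \<Longrightarrow> a \<in> cob C \<Longrightarrow> b \<in> cob C \<Longrightarrow> cd (z x y a b) = vo (ho x a) (ho y b)"
  using z_hom unfolding hom_def by auto

lemma z_natural:
  "f \<in> car C \<Longrightarrow> g \<in> car C \<Longrightarrow> h \<in> car C \<Longrightarrow> k \<in> car C \<Longrightarrow>
   cp (z (cd f) (cd g) (cd h) (cd k)) (ha (va f g) (va h k))
   = cp (va (ha f h) (ha g k)) (z (dm f) (dm g) (dm h) (dm k))"
  using z_natural_all by blast

lemma T2_zeta:
  "a \<in> cob C \<Longrightarrow> b \<in> cob C \<Longrightarrow> c \<in> cob C \<Longrightarrow> d \<in> cob C \<Longrightarrow>
   cp (z (F a) (F b) (F c) (F d)) (cp (ha (T2v a b) (T2v c d)) (T2h (vo a b) (vo c d)))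
   = cp (va (T2h a c) (T2h b d)) (cp (T2v (ho a c) (ho b d)) (Fa (z a b c d)))"
  using T2_zeta_all by blast

lemma T0h_Fa_cinv_io: "cp T0h (Fa (cinv C io)) = cp (cinv C io) T0v"
proof -
  have "cp io (cp T0h (Fa (cinv C io))) = cp (cp T0v (Fa io)) (Fa (cinv C io))"
    by (simp add: T0_io)
  also have "\<dots> = T0v"
    by (simp flip: Fa_comp)
  finally have "cp (cinv C io) (cp io (cp T0h (Fa (cinv C io)))) = cp (cinv C io) T0v"
    by simp
  then show ?thesis
    by simp
qed

definition lam_one where "lam_one x = cp (tla H x) (ha (cinv C io) (ci x))"
definition rho_one where "rho_one x = cp (tra H x) (ha (ci x) (cinv C io))"

lemma lam_one_car [simp]: "x \<in> cob C \<Longrightarrow> lam_one x \<in> car C"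
  and lam_one_dom [simp]: "x \<in> cob C \<Longrightarrow> dm (lam_one x) = ho one x"
  and lam_one_cod [simp]: "x \<in> cob C \<Longrightarrow> cd (lam_one x) = x"
  and rho_one_car [simp]: "x \<in> cob C \<Longrightarrow> rho_one x \<in> car C"
  and rho_one_dom [simp]: "x \<in> cob C \<Longrightarrow> dm (rho_one x) = ho x one"
  and rho_one_cod [simp]: "x \<in> cob C \<Longrightarrow> cd (rho_one x) = x"
  unfolding lam_one_def rho_one_def by auto

lemma Fa_lam_one:
  assumes c: "c \<in> cob C"
  shows "Fa (lam_one c) = cp (lam_one (F c)) (cp (ha T0v (ci (F c))) (T2h one c))"
proof -
  have "Fa (lam_one c) = cp (Fa (tla H c)) (Fa (ha (cinv C io) (ci c)))"
    using c by (simp add: lam_one_def)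
  also have "\<dots> = cp (tla H (F c)) (cp (ha T0h (ci (F c)))
      (cp (T2h bt c) (Fa (ha (cinv C io) (ci c)))))"
    using c by (simp add: H.Fa_tla)
  also have "\<dots> = cp (tla H (F c)) (cp (ha T0h (ci (F c)))
      (cp (ha (Fa (cinv C io)) (ci (F c))) (T2h one c)))"
    using H.T2_natural [of "cinv C io" "ci c"] c by simp
  also have "\<dots> = cp (tla H (F c)) (cp (ha (cp T0h (Fa (cinv C io))) (ci (F c))) (T2h one c))"
    using c by (simp add: H.tar_comp_cid)
  also have "\<dots> = cp (lam_one (F c)) (cp (ha T0v (ci (F c))) (T2h one c))"
    using c by (simp add: T0h_Fa_cinv_io H.tar_comp_cid lam_one_def)
  finally show ?thesis .
qed

lemma Fa_rho_one:
  assumes c: "c \<in> cob C"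
  shows "Fa (rho_one c) = cp (rho_one (F c)) (cp (ha (ci (F c)) T0v) (T2h c one))"
proof -
  have "Fa (rho_one c) = cp (Fa (tra H c)) (Fa (ha (ci c) (cinv C io)))"
    using c by (simp add: rho_one_def)
  also have "\<dots> = cp (tra H (F c)) (cp (ha (ci (F c)) T0h)
      (cp (T2h c bt) (Fa (ha (ci c) (cinv C io)))))"
    using c by (simp add: H.Fa_tra)
  also have "\<dots> = cp (tra H (F c)) (cp (ha (ci (F c)) T0h)
      (cp (ha (ci (F c)) (Fa (cinv C io))) (T2h c one)))"
    using H.T2_natural [of "ci c" "cinv C io"] c by simp
  also have "\<dots> = cp (tra H (F c)) (cp (ha (ci (F c)) (cp T0h (Fa (cinv C io)))) (T2h c one))"
    using c by (simp add: H.tar_cid_comp)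
  also have "\<dots> = cp (rho_one (F c)) (cp (ha (ci (F c)) T0v) (T2h c one))"
    using c by (simp add: T0h_Fa_cinv_io H.tar_cid_comp rho_one_def)
  finally show ?thesis .
qed

text \<open>The pasting argument shared by the four distributors: an arrow
  \<open>(p \<bullet> q) \<cdot> \<zeta> \<cdot> (r \<circ> s)\<close> is carried by \<open>T\<close> to its lift as soon as \<open>p\<close> and \<open>q\<close> are
  compatible with \<open>T\<^sup>\<circ>\<^sub>2\<close> and \<open>r\<close> and \<open>s\<close> with \<open>T\<^sup>\<bullet>\<^sub>2\<close>, the comparisons meeting in
  \<open>e\<^sub>1, \<dots>, e\<^sub>4\<close>.\<close>

lemma lift_zeta_composite:
  assumes ob: "x \<in> cob C" "y \<in> cob C" "u \<in> cob C" "w \<in> cob C"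
    and r: "r \<in> car C" "dm r = A" "cd r = vo x y"
    and s: "s \<in> car C" "dm s = B" "cd s = vo u w"
    and p: "p \<in> car C" "dm p = ho x u" "cd p = m"
    and q: "q \<in> car C" "dm q = ho y w" "cd q = n"
    and P: "P \<in> car C" "dm P = F m"
    and Q: "Q \<in> car C" "dm Q = F n"
    and e1: "e1 \<in> car C" "dm e1 = F x" "cd e1 = x'"
    and e2: "e2 \<in> car C" "dm e2 = F u" "cd e2 = u'"
    and e3: "e3 \<in> car C" "dm e3 = F y" "cd e3 = y'"
    and e4: "e4 \<in> car C" "dm e4 = F w" "cd e4 = w'"
    and p': "p' \<in> car C" "dm p' = ho x' u'" "cd p' = cd P"
    and q': "q' \<in> car C" "dm q' = ho y' w'" "cd q' = cd Q"
    and lift_p: "cp P (Fa p) = cp p' (cp (ha e1 e2) (T2h x u))"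
    and lift_q: "cp Q (Fa q) = cp q' (cp (ha e3 e4) (T2h y w))"
    and lift_r: "cp (va e1 e3) (cp (T2v x y) (Fa r)) = r'"
    and lift_s: "cp (va e2 e4) (cp (T2v u w) (Fa s)) = s'"
  shows "cp (cp (va P Q) (T2v m n)) (Fa (cp (va p q) (cp (z x y u w) (ha r s))))
    = cp (va p' q') (cp (z x' y' u' w') (cp (ha r' s') (T2h A B)))"
proof -
  have ob': "m \<in> cob C" "n \<in> cob C" "A \<in> cob C" "B \<in> cob C"
      "x' \<in> cob C" "y' \<in> cob C" "u' \<in> cob C" "w' \<in> cob C"
    using r s p q e1 e2 e3 e4 by (metis dom_ob cod_ob)+
  note facts = ob ob' r s p q P Q e1 e2 e3 e4 p' q'
  let ?Fzrs = "cp (Fa (z x y u w)) (Fa (ha r s))"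
  have "cp (cp (va P Q) (T2v m n)) (Fa (cp (va p q) (cp (z x y u w) (ha r s))))
      = cp (va P Q) (cp (cp (T2v m n) (Fa (va p q))) ?Fzrs)"
    using facts by simp
  also have "\<dots> = cp (va P Q) (cp (cp (va (Fa p) (Fa q)) (T2v (ho x u) (ho y w))) ?Fzrs)"
    using V.T2_natural [of p q] facts by simp
  also have "\<dots> = cp (va (cp P (Fa p)) (cp Q (Fa q))) (cp (T2v (ho x u) (ho y w)) ?Fzrs)"
    using facts by (simp add: V.interchange)
  also have "\<dots> = cp (va p' q') (cp (va (ha e1 e2) (ha e3 e4))
      (cp (cp (va (T2h x u) (T2h y w)) (cp (T2v (ho x u) (ho y w)) (Fa (z x y u w)))) (Fa (ha r s))))"
    using facts by (simp add: lift_p lift_q V.interchange)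
  also have "\<dots> = cp (va p' q') (cp (cp (va (ha e1 e2) (ha e3 e4)) (z (F x) (F y) (F u) (F w)))
      (cp (ha (T2v x y) (T2v u w)) (cp (T2h (vo x y) (vo u w)) (Fa (ha r s)))))"
    using facts by (simp flip: T2_zeta)
  also have "\<dots> = cp (va p' q') (cp (cp (z x' y' u' w') (ha (va e1 e3) (va e2 e4)))
      (cp (ha (T2v x y) (T2v u w)) (cp (ha (Fa r) (Fa s)) (T2h A B))))"
    using z_natural [of e1 e3 e2 e4] H.T2_natural [of r s] facts by simp
  also have "\<dots> = cp (va p' q') (cp (z x' y' u' w') (cp (ha r' s') (T2h A B)))"
    using facts by (simp add: H.interchange flip: lift_r lift_s)
  finally show ?thesis .
qed

lemma Fa_dist_ll:
  assumes a: "a \<in> cob C" and b: "b \<in> cob C" and c: "c \<in> cob C"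
  shows "cp (cp (va (T2h a b) (ci (F c))) (T2v (ho a b) c)) (Fa (dist_ll C H V z io a b c))
    = cp (cp (dist_ll C H V z io (F a) (F b) (F c)) (ha (ci (F a)) (T2v b c))) (T2h a (vo b c))"
proof -
  have "cp (cp (va (T2h a b) (ci (F c))) (T2v (ho a b) c)) (Fa (dist_ll C H V z io a b c))
      = cp (va (ci (ho (F a) (F b))) (lam_one (F c))) (cp (z (F a) one (F b) (F c))
          (cp (ha (cinv C (tra V (F a))) (T2v b c)) (T2h a (vo b c))))"
    unfolding dist_ll_def lam_one_def [symmetric]
    by (rule lift_zeta_composite [where ?e1.0 = "ci (F a)" and ?e2.0 = "ci (F b)"
          and ?e3.0 = T0v and ?e4.0 = "ci (F c)"])
      (simp_all add: a b c Fa_lam_one V.T2_Fa_cinv_tra)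
  then show ?thesis
    using H.tar_split_right_first [of "cinv C (tra V (F a))" "T2v b c"] a b c
    by (simp add: dist_ll_def lam_one_def)
qed

lemma Fa_dist_rr:
  assumes a: "a \<in> cob C" and b: "b \<in> cob C" and c: "c \<in> cob C"
  shows "cp (cp (va (ci (F b)) (T2h c a)) (T2v b (ho c a))) (Fa (dist_rr C H V z io a b c))
    = cp (cp (dist_rr C H V z io (F a) (F b) (F c)) (ha (T2v b c) (ci (F a)))) (T2h (vo b c) a)"
proof -
  have "cp (cp (va (ci (F b)) (T2h c a)) (T2v b (ho c a))) (Fa (dist_rr C H V z io a b c))
      = cp (va (rho_one (F b)) (ci (ho (F c) (F a)))) (cp (z (F b) (F c) one (F a))
          (cp (ha (T2v b c) (cinv C (tla V (F a)))) (T2h (vo b c) a)))"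
    unfolding dist_rr_def rho_one_def [symmetric]
    by (rule lift_zeta_composite [where ?e1.0 = "ci (F b)" and ?e2.0 = T0v
          and ?e3.0 = "ci (F c)" and ?e4.0 = "ci (F a)"])
      (simp_all add: a b c Fa_rho_one V.T2_Fa_cinv_tla)
  then show ?thesis
    using H.tar_split_left_first [of "T2v b c" "cinv C (tla V (F a))"] a b c
    by (simp add: dist_rr_def rho_one_def)
qed

lemma Fa_dist_lr:
  assumes a: "a \<in> cob C" and b: "b \<in> cob C" and c: "c \<in> cob C"
  shows "cp (cp (va (ci (F b)) (T2h a c)) (T2v b (ho a c))) (Fa (dist_lr C H V z io a b c))
    = cp (cp (dist_lr C H V z io (F a) (F b) (F c)) (ha (ci (F a)) (T2v b c))) (T2h a (vo b c))"
proof -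
  have "cp (cp (va (ci (F b)) (T2h a c)) (T2v b (ho a c))) (Fa (dist_lr C H V z io a b c))
      = cp (va (lam_one (F b)) (ci (ho (F a) (F c)))) (cp (z one (F a) (F b) (F c))
          (cp (ha (cinv C (tla V (F a))) (T2v b c)) (T2h a (vo b c))))"
    unfolding dist_lr_def lam_one_def [symmetric]
    by (rule lift_zeta_composite [where ?e1.0 = T0v and ?e2.0 = "ci (F b)"
          and ?e3.0 = "ci (F a)" and ?e4.0 = "ci (F c)"])
      (simp_all add: a b c Fa_lam_one V.T2_Fa_cinv_tla)
  then show ?thesis
    using H.tar_split_right_first [of "cinv C (tla V (F a))" "T2v b c"] a b c
    by (simp add: dist_lr_def lam_one_def)
qed

lemma Fa_dist_rl:
  assumes a: "a \<in> cob C" and b: "b \<in> cob C" and c: "c \<in> cob C"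
  shows "cp (cp (va (T2h b a) (ci (F c))) (T2v (ho b a) c)) (Fa (dist_rl C H V z io a b c))
    = cp (cp (dist_rl C H V z io (F a) (F b) (F c)) (ha (T2v b c) (ci (F a)))) (T2h (vo b c) a)"
proof -
  have "cp (cp (va (T2h b a) (ci (F c))) (T2v (ho b a) c)) (Fa (dist_rl C H V z io a b c))
      = cp (va (ci (ho (F b) (F a))) (rho_one (F c))) (cp (z (F b) (F c) (F a) one)
          (cp (ha (T2v b c) (cinv C (tra V (F a)))) (T2h (vo b c) a)))"
    unfolding dist_rl_def rho_one_def [symmetric]
    by (rule lift_zeta_composite [where ?e1.0 = "ci (F b)" and ?e2.0 = "ci (F a)"
          and ?e3.0 = "ci (F c)" and ?e4.0 = T0v])
      (simp_all add: a b c Fa_rho_one V.T2_Fa_cinv_tra)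
  then show ?thesis
    using H.tar_split_left_first [of "T2v b c" "cinv C (tra V (F a))"] a b c
    by (simp add: dist_rl_def rho_one_def)
qed

end

theorem mainTheorem4:
  fixes C :: "('o,'m) cat" and H V :: "('o,'m) moncat"
    and z :: "'o \<Rightarrow> 'o \<Rightarrow> 'o \<Rightarrow> 'o \<Rightarrow> 'm" and nu vp io :: 'm
    and T :: "('o,'m) monad" and T2h T2v :: "'o \<Rightarrow> 'o \<Rightarrow> 'm" and T0h T0v :: 'm
    and a b c :: 'o
  assumes "normal_duoidal C H V z nu vp io"
    and "double_opmonoidal C H V z nu vp io T T2h T0h T2v T0v"
    and "a \<in> cob C" and "b \<in> cob C" and "c \<in> cob C"
  shows
   "ccomp C (ccomp C (tar V (T2h a b) (cid C (mfo T c))) (T2v (tob H a b) c))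
        (mfa T (dist_ll C H V z io a b c))
    = ccomp C (ccomp C (dist_ll C H V z io (mfo T a) (mfo T b) (mfo T c))
        (tar H (cid C (mfo T a)) (T2v b c))) (T2h a (tob V b c))
  \<and> ccomp C (ccomp C (tar V (cid C (mfo T b)) (T2h c a)) (T2v b (tob H c a)))
        (mfa T (dist_rr C H V z io a b c))
    = ccomp C (ccomp C (dist_rr C H V z io (mfo T a) (mfo T b) (mfo T c))
        (tar H (T2v b c) (cid C (mfo T a)))) (T2h (tob V b c) a)
  \<and> ccomp C (ccomp C (tar V (cid C (mfo T b)) (T2h a c)) (T2v b (tob H a c)))
        (mfa T (dist_lr C H V z io a b c))
    = ccomp C (ccomp C (dist_lr C H V z io (mfo T a) (mfo T b) (mfo T c))
        (tar H (cid C (mfo T a)) (T2v b c))) (T2h a (tob V b c))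
  \<and> ccomp C (ccomp C (tar V (T2h b a) (cid C (mfo T c))) (T2v (tob H b a) c))
        (mfa T (dist_rl C H V z io a b c))
    = ccomp C (ccomp C (dist_rl C H V z io (mfo T a) (mfo T b) (mfo T c))
        (tar H (T2v b c) (cid C (mfo T a)))) (T2h (tob V b c) a)"
proof -
  interpret double_opmonoidal_context C H V z nu vp io T T2h T2v T0h T0v
    using assms(1,2) by unfold_locales
  show ?thesis
    using Fa_dist_ll Fa_dist_rr Fa_dist_lr Fa_dist_rl assms(3-5) by blast
qed

end
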